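(* Let $q$ be a polynomial of degree $n$. Then $\mathcal D_\zeta(q)\le n^2\|q\|_{H^2}^2$ for every $\zeta\in\overline{\mathbb D}$.
   Context: $\mathbb D$ is the open unit disk, $H^2$ the Hardy space with $\|\sum c_kz^k\|_{H^2}^2=\sum|c_k|^2$. For $\zeta\in\overline{\mathbb D}$, $\mathcal D_\zeta$ is the set of holomorphic $f$ on $\mathbb D$ of the form $f(z)=a+(z-\zeta)g(z)$ with $g\in H^2$, $a\in\mathbb C$; for such $f$ set $\mathcal D_\zeta(f):=\|g\|_{H^2}^2$. *)

theory Defs
  imports "HOL-Analysis.Analysis" "HOL-Computational_Algebra.Polynomial"
begin

definition taylor_coeff :: "(complex \<Rightarrow> complex) \<Rightarrow> nat \<Rightarrow> complex" where
  "taylor_coeff f k = (deriv ^^ k) f 0 / of_nat (fact k)"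

definition H2_norm_sq :: "(complex \<Rightarrow> complex) \<Rightarrow> real" where
  "H2_norm_sq f = (\<Sum>k. (cmod (taylor_coeff f k))\<^sup>2)"

definition in_H2 :: "(complex \<Rightarrow> complex) \<Rightarrow> bool" where
  "in_H2 f \<longleftrightarrow> f holomorphic_on ball 0 1 \<and> summable (\<lambda>k. (cmod (taylor_coeff f k))\<^sup>2)"

definition in_Dzeta :: "complex \<Rightarrow> (complex \<Rightarrow> complex) \<Rightarrow> bool" where
  "in_Dzeta \<zeta> f \<longleftrightarrow> (\<exists>a g. in_H2 g \<and> (\<forall>z\<in>ball 0 1. f z = a + (z - \<zeta>) * g z))"

definition Dzeta :: "complex \<Rightarrow> (complex \<Rightarrow> complex) \<Rightarrow> real" where
  "Dzeta \<zeta> f = H2_norm_sq (SOME g. in_H2 g \<and> (\<exists>a. \<forall>z\<in>ball 0 1. f z = a + (z - \<zeta>) * g z))"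

end

theory Submission
  imports Defs "HOL-Complex_Analysis.Complex_Analysis"
begin

text \<open>
  Division by \<open>z - \<zeta>\<close> gives \<open>q(z) = q(\<zeta>) + (z - \<zeta>) s(z)\<close>, where \<open>s\<close> is the synthetic quotient,
  a polynomial of degree \<open>n - 1\<close>. The factor \<open>g\<close> in \<open>q = a + (z - \<zeta>) g\<close> is unique among
  \<open>H\<^sup>2\<close> functions when \<open>|\<zeta>| \<le> 1\<close>: the difference \<open>d\<close> of the Taylor coefficients of two
  such factors satisfies \<open>d\<^sub>k = \<zeta> d\<^sub>k\<^sub>+\<^sub>1\<close>, so \<open>|d\<^sub>k|\<close> is nondecreasing, while it is
  square summable; hence \<open>d = 0\<close> and \<open>\<D>\<^sub>\<zeta>(q) = \<parallel>s\<parallel>\<^sup>2\<close>. Since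
  \<open>s\<^sub>k = q\<^sub>k\<^sub>+\<^sub>1 + \<zeta> s\<^sub>k\<^sub>+\<^sub>1\<close>, each \<open>|s\<^sub>k|\<close> is at most \<open>\<Sum>\<^sub>j\<^sub>>\<^sub>k |q\<^sub>j|\<close>, whose square is at most
  \<open>n \<parallel>q\<parallel>\<^sup>2\<close> by Cauchy--Schwarz; summing over the \<open>n\<close> coefficients of \<open>s\<close> gives \<open>n\<^sup>2 \<parallel>q\<parallel>\<^sup>2\<close>.
\<close>

lemma taylor_coeff_eq_fps_nth:
  "f has_fps_expansion F \<Longrightarrow> taylor_coeff f k = fps_nth F k"
  by (simp add: taylor_coeff_def fps_nth_fps_expansion)

lemma poly_has_fps_expansion: "poly p has_fps_expansion fps_of_poly p"
proof -
  have "eval_fps (fps_of_poly p) has_fps_expansion fps_of_poly p"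
    by (rule eval_fps_has_fps_expansion) simp
  moreover have "eval_fps (fps_of_poly p) = poly p"
    by (rule ext) simp
  ultimately show ?thesis
    by simp
qed

lemma taylor_coeff_poly: "taylor_coeff (poly p) k = coeff p k"
  using taylor_coeff_eq_fps_nth[OF poly_has_fps_expansion] by simp

lemma H2_norm_sq_poly:
  assumes "\<And>k. N \<le> k \<Longrightarrow> coeff p k = 0"
  shows "H2_norm_sq (poly p) = (\<Sum>k<N. (cmod (coeff p k))\<^sup>2)"
  unfolding H2_norm_sq_def taylor_coeff_poly
  by (rule suminf_finite) (use assms in auto)

lemma in_H2_poly: "in_H2 (poly p)"
  unfolding in_H2_def taylor_coeff_poly
  by (auto intro!: holomorphic_intros summable_finite[of "{..degree p}"]
           simp: coeff_eq_0 le_degree)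

lemma poly_eq_synthetic_div_factor:
  fixes p :: "'a :: comm_ring_1 poly"
  shows "poly p z = poly p c + (z - c) * poly (synthetic_div p c) z"
proof -
  have "poly p z = poly ([:-c, 1:] * synthetic_div p c + [:poly p c:]) z"
    by (subst synthetic_div_correct') simp
  then show ?thesis
    by (simp add: algebra_simps)
qed

lemma coeff_synthetic_div:
  "coeff (synthetic_div p c) k = coeff p (Suc k) + c * coeff (synthetic_div p c) (Suc k)"
proof -
  have "coeff (p + smult c (synthetic_div p c)) (Suc k)
      = coeff (pCons (poly p c) (synthetic_div p c)) (Suc k)"
    by (subst synthetic_div_correct) simp
  then show ?thesis
    by simp
qed

lemma coeff_synthetic_div_eq_0:
  "degree p \<le> k \<Longrightarrow> coeff (synthetic_div p c) k = 0"
proof (cases "degree p = 0")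
  case True
  then show ?thesis
    using synthetic_div_eq_0_iff[of p c] by simp
next
  case False
  then show "degree p \<le> k \<Longrightarrow> ?thesis"
    by (intro coeff_eq_0) (simp add: degree_synthetic_div)
qed

lemma norm_coeff_synthetic_div_le:
  fixes p :: "'a :: real_normed_field poly"
  assumes "norm c \<le> 1"
  shows "norm (coeff (synthetic_div p c) k) \<le> (\<Sum>j\<in>{Suc k..degree p}. norm (coeff p j))"
proof (cases "k \<le> degree p")
  case False
  then show ?thesis
    by (simp add: coeff_synthetic_div_eq_0)
next
  case True
  then show ?thesis
  proof (induction k rule: inc_induct)
    case base
    show ?case
      by (simp add: coeff_synthetic_div_eq_0)
  next
    case (step k)
    have "norm (coeff (synthetic_div p c) k)
        \<le> norm (coeff p (Suc k)) + norm c * norm (coeff (synthetic_div p c) (Suc k))"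
      by (metis coeff_synthetic_div norm_mult norm_triangle_ineq)
    also have "\<dots> \<le> norm (coeff p (Suc k)) + (\<Sum>j\<in>{Suc (Suc k)..degree p}. norm (coeff p j))"
      using step.IH mult_left_le_one_le[OF norm_ge_zero norm_ge_zero assms]
      by (meson add_left_mono order_trans)
    also have "\<dots> = (\<Sum>j\<in>{Suc k..degree p}. norm (coeff p j))"
      using step.hyps by (simp add: sum.atLeast_Suc_atMost)
    finally show ?case .
  qed
qed

lemma eq_0_if_square_summable_scaled_recurrence:
  fixes d :: "nat \<Rightarrow> 'a :: real_normed_div_algebra"
  assumes rec: "\<And>k. d k = c * d (Suc k)" and "norm c \<le> 1"
    and "summable (\<lambda>k. (norm (d k))\<^sup>2)"
  shows "d k = 0"
proof -
  have "norm (d k) \<le> norm (d (Suc k))" for k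
    using rec[of k] mult_left_le_one_le[OF norm_ge_zero norm_ge_zero \<open>norm c \<le> 1\<close>]
    by (simp add: norm_mult)
  then have "(norm (d k))\<^sup>2 \<le> (norm (d m))\<^sup>2" if "k \<le> m" for m
    using lift_Suc_mono_le[of "\<lambda>k. norm (d k)", OF _ that] by (simp add: power_mono)
  moreover have "(\<lambda>m. (norm (d m))\<^sup>2) \<longlonglongrightarrow> 0"
    using \<open>summable _\<close> by (rule summable_LIMSEQ_zero)
  ultimately have "(norm (d k))\<^sup>2 \<le> 0"
    using LIMSEQ_le_const by blast
  then show ?thesis
    by simp
qed

lemma taylor_coeff_eq_coeff_synthetic_div:
  assumes "cmod \<zeta> \<le> 1" and "in_H2 g"
    and factor: "\<forall>z\<in>ball 0 1. poly p z = a + (z - \<zeta>) * g z"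
  shows "taylor_coeff g k = coeff (synthetic_div p \<zeta>) k"
proof -
  define G where "G = fps_expansion g 0"
  have "g has_fps_expansion G"
    unfolding G_def using \<open>in_H2 g\<close>
    by (intro has_fps_expansion_fps_expansion[of "ball 0 1"]) (auto simp: in_H2_def)
  then have taylor_g: "taylor_coeff g k = fps_nth G k" for k
    by (rule taylor_coeff_eq_fps_nth)
  have "(\<lambda>z. a + (z - \<zeta>) * g z) has_fps_expansion fps_const a + (fps_X - fps_const \<zeta>) * G"
    by (intro fps_expansion_intros \<open>g has_fps_expansion G\<close>)
  moreover have "eventually (\<lambda>z. a + (z - \<zeta>) * g z = poly p z) (nhds 0)"
    using factor by (intro eventually_nhds_in_open[THEN eventually_mono, of "ball 0 1"]) auto
  ultimately have p_expansion:
    "poly p has_fps_expansion fps_const a + (fps_X - fps_const \<zeta>) * G"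
    by (simp add: has_fps_expansion_cong)
  have coeff_p: "coeff p (Suc k) = fps_nth G k - \<zeta> * fps_nth G (Suc k)" for k
    using taylor_coeff_eq_fps_nth[OF p_expansion, of "Suc k"]
    by (simp add: taylor_coeff_poly algebra_simps fps_X_mult_nth)
  define d where "d k = fps_nth G k - coeff (synthetic_div p \<zeta>) k" for k
  have "d k = \<zeta> * d (Suc k)" for k
    unfolding d_def using coeff_p[of k] coeff_synthetic_div[of p \<zeta> k]
    by (simp add: algebra_simps)
  moreover have "summable (\<lambda>k. (cmod (d k))\<^sup>2)"
  proof (rule summable_cong[THEN iffD1])
    show "eventually (\<lambda>k. (cmod (taylor_coeff g k))\<^sup>2 = (cmod (d k))\<^sup>2) sequentially"
      using eventually_ge_at_top[of "degree p"]
      by eventually_elim (simp add: d_def taylor_g coeff_synthetic_div_eq_0)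
    show "summable (\<lambda>k. (cmod (taylor_coeff g k))\<^sup>2)"
      using \<open>in_H2 g\<close> by (simp add: in_H2_def)
  qed
  ultimately have "d k = 0"
    using eq_0_if_square_summable_scaled_recurrence \<open>cmod \<zeta> \<le> 1\<close> by blast
  then show ?thesis
    by (simp add: d_def taylor_g)
qed

lemma in_Dzeta_poly: "in_Dzeta \<zeta> (poly p)"
  unfolding in_Dzeta_def using in_H2_poly poly_eq_synthetic_div_factor by blast

lemma Dzeta_poly:
  assumes "cmod \<zeta> \<le> 1"
  shows "Dzeta \<zeta> (poly p) = H2_norm_sq (poly (synthetic_div p \<zeta>))"
proof -
  define P where "P g \<longleftrightarrow> in_H2 g \<and> (\<exists>a. \<forall>z\<in>ball 0 1. poly p z = a + (z - \<zeta>) * g z)" for g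
  have "P (poly (synthetic_div p \<zeta>))"
    unfolding P_def using in_H2_poly poly_eq_synthetic_div_factor by blast
  then have "P (SOME g. P g)"
    by (rule someI[of P])
  moreover define g where "g = (SOME g. P g)"
  ultimately obtain a where "in_H2 g" "\<forall>z\<in>ball 0 1. poly p z = a + (z - \<zeta>) * g z"
    unfolding P_def by blast
  then have "taylor_coeff g = taylor_coeff (poly (synthetic_div p \<zeta>))"
    using taylor_coeff_eq_coeff_synthetic_div[OF assms] by (auto simp: taylor_coeff_poly)
  moreover have "Dzeta \<zeta> (poly p) = H2_norm_sq g"
    by (simp add: Dzeta_def g_def P_def)
  ultimately show ?thesis
    by (simp add: H2_norm_sq_def)
qed

lemma H2_norm_sq_synthetic_div_le:
  assumes "cmod c \<le> 1"
  shows "H2_norm_sq (poly (synthetic_div p c)) \<le> (real (degree p))\<^sup>2 * H2_norm_sq (poly p)"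
proof -
  define n where "n = degree p"
  have H2_p: "H2_norm_sq (poly p) = (\<Sum>j<Suc n. (cmod (coeff p j))\<^sup>2)"
    by (rule H2_norm_sq_poly) (simp add: n_def coeff_eq_0)
  have coeff_le: "(cmod (coeff (synthetic_div p c) k))\<^sup>2 \<le> n * H2_norm_sq (poly p)" for k
  proof -
    have "(cmod (coeff (synthetic_div p c) k))\<^sup>2 \<le> (\<Sum>j\<in>{Suc k..n}. cmod (coeff p j))\<^sup>2"
      using norm_coeff_synthetic_div_le[OF assms] by (intro power_mono) (auto simp: n_def)
    also have "\<dots> \<le> (\<Sum>j\<in>{Suc k..n}. (cmod (coeff p j))\<^sup>2) * card {Suc k..n}"
      by (rule sum_squared_le_sum_of_squares)
    also have "\<dots> \<le> H2_norm_sq (poly p) * n"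
      unfolding H2_p by (intro mult_mono sum_mono2) (auto simp: sum_nonneg)
    finally show ?thesis
      by (simp add: mult.commute)
  qed
  have "H2_norm_sq (poly (synthetic_div p c)) = (\<Sum>k<n. (cmod (coeff (synthetic_div p c) k))\<^sup>2)"
    by (rule H2_norm_sq_poly) (simp add: n_def coeff_synthetic_div_eq_0)
  also have "\<dots> \<le> (\<Sum>k<n. n * H2_norm_sq (poly p))"
    by (intro sum_mono coeff_le)
  also have "\<dots> = n\<^sup>2 * H2_norm_sq (poly p)"
    by (simp add: power2_eq_square)
  finally show ?thesis
    by (simp add: n_def)
qed

theorem lemma3p1:
  fixes q :: "complex poly" and n :: nat and \<zeta> :: complex
  assumes "degree q = n" and "\<zeta> \<in> cball 0 1"
  shows "in_Dzeta \<zeta> (poly q) \<and> Dzeta \<zeta> (poly q) \<le> (real n)\<^sup>2 * H2_norm_sq (poly q)"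
proof -
  have "cmod \<zeta> \<le> 1"
    using assms(2) by simp
  then have "Dzeta \<zeta> (poly q) \<le> (real (degree q))\<^sup>2 * H2_norm_sq (poly q)"
    unfolding Dzeta_poly[OF \<open>cmod \<zeta> \<le> 1\<close>] by (rule H2_norm_sq_synthetic_div_le)
  then show ?thesis
    using in_Dzeta_poly assms(1) by simp
qed

end
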